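(* Let $\mathcal X$ and $\mathcal Y$ be measurable spaces, let $\Theta$ be a parameter set, and let $L(\theta;y,x)$ be a real-valued loss on $\Theta\times\mathcal Y\times\mathcal X$. Let $\theta(\cdot)$ be the regression functional $\theta(P)=\mathrm{argmin}_{\theta\in\Theta}\,E_P[L(\theta;Y,X)]$ (assumed to exist uniquely for the joint distributions on which it is evaluated). Fix a Markov kernel $P_{Y|X}$. If there is $\theta_0\in\Theta$ that minimizes $\theta\mapsto E[L(\theta;Y,x)\mid X=x]=\int L(\theta;y,x)\,P_{Y|X=x}(dy)$ for every $x\in\mathcal X$, then $\theta(\cdot)$ is well-specified for $P_{Y|X}$, and moreover $\theta(P_{Y|X}\otimes P_X)=\theta_0$ for every acceptable regressor distribution $P_X$.
   Context: A joint distribution $P$ of $(Y,X)$ on $\mathcal Y\times\mathcal X$ is written $P=P_{Y|X}\otimes P_X$, meaning $P(dy,dx)=P_{Y|X=x}(dy)\,P_X(dx)$, where $P_X$ is the marginal distribution of the regressor $X$ and $P_{Y|X}: x\mapsto P_{Y|X=x}$ is a Markov kernel (a regular conditional distribution defined for every $x$). A regression functional assigns a value $\theta(P)\in\Theta$ to joint distributions $P$ in a class $\mathcal P$. There is a designated set of "acceptable" regressor distributions (those for which the functional is identifiable/defined); $P_{Y|X}\otimes P_X\in\mathcal P$ for every acceptable $P_X$, and the set of acceptable distributions is closed under mixing: if $P_X$ is acceptable and $P_X'$ is any distribution on $\mathcal X$, then $\alpha P_X+(1-\alpha)P_X'$ is acceptable for $0<\alpha\le 1$. The functional $\theta$ is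 called well-specified for $P_{Y|X}$ if $\theta(P_{Y|X}\otimes P_X)=\theta(P_{Y|X}\otimes P_X')$ for all acceptable regressor distributions $P_X,P_X'$. All expectations are assumed to exist. *)

theory Defs
  imports "HOL-Probability.Probability"
begin

text \<open>Joint distribution P = P_{Y|X} (x) P_X of (Y,X) on Y x X, built from the
  Markov kernel K (x maps to P_{Y|X=x}) and the regressor distribution PX.\<close>
definition joint_dist :: "'y measure \<Rightarrow> 'x measure \<Rightarrow> ('x \<Rightarrow> 'y measure) \<Rightarrow> 'x measure
    \<Rightarrow> ('y \<times> 'x) measure" where
  "joint_dist MY MX K PX = PX \<bind> (\<lambda>x. distr (K x) (MY \<Otimes>\<^sub>M MX) (\<lambda>y. (y, x)))"

definition risk :: "('t \<Rightarrow> 'y \<Rightarrow> 'x \<Rightarrow> real) \<Rightarrow> ('y \<times> 'x) measure \<Rightarrow> 't \<Rightarrow> real" where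
  "risk L P t = (\<integral>z. L t (fst z) (snd z) \<partial>P)"

definition argmin_functional :: "('t \<Rightarrow> 'y \<Rightarrow> 'x \<Rightarrow> real) \<Rightarrow> 't set \<Rightarrow> ('y \<times> 'x) measure \<Rightarrow> 't" where
  "argmin_functional L Theta P = (THE t. t \<in> Theta \<and> (\<forall>t'\<in>Theta. risk L P t \<le> risk L P t'))"

definition mix_measure :: "'a measure \<Rightarrow> real \<Rightarrow> 'a measure \<Rightarrow> 'a measure \<Rightarrow> 'a measure" where
  "mix_measure M \<alpha> P P' = measure_of (space M) (sets M)
     (\<lambda>A. ennreal \<alpha> * emeasure P A + ennreal (1 - \<alpha>) * emeasure P' A)"

definition well_specified :: "(('y \<times> 'x) measure \<Rightarrow> 't) \<Rightarrow> 'y measure \<Rightarrow> 'x measure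
    \<Rightarrow> 'x measure set \<Rightarrow> ('x \<Rightarrow> 'y measure) \<Rightarrow> bool" where
  "well_specified \<theta> MY MX Acc K \<longleftrightarrow>
     (\<forall>PX\<in>Acc. \<forall>PX'\<in>Acc. \<theta> (joint_dist MY MX K PX) = \<theta> (joint_dist MY MX K PX'))"

end

theory Submission
  imports Defs
begin

text \<open>By disintegration along the kernel, the risk of \<open>t\<close> under
  \<open>P\<^sub>Y\<^sub>|\<^sub>X \<otimes> P\<^sub>X\<close> is the \<open>P\<^sub>X\<close>-average of the conditional risks \<open>x \<mapsto> \<integral> L t y x \<partial>K x\<close>.
  A parameter minimising every conditional risk therefore minimises every such average,
  and uniqueness of the minimiser identifies it with the functional for every acceptable
  \<open>P\<^sub>X\<close>; in particular the functional does not depend on \<open>P\<^sub>X\<close>.\<close>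

lemma sets_kernel:
  assumes "K \<in> MX \<rightarrow>\<^sub>M subprob_algebra MY" "x \<in> space MX"
  shows "sets (K x) = sets MY"
  using measurable_space[OF assms] by (simp add: space_subprob_algebra)

lemma nn_integral_bind_finite:
  fixes g :: "'b \<Rightarrow> ennreal"
  assumes N: "N \<in> M \<rightarrow>\<^sub>M subprob_algebra B"
    and g: "g \<in> borel_measurable B"
    and finite: "(\<integral>\<^sup>+y. g y \<partial>(M \<bind> N)) < \<infinity>"
  shows "AE x in M. (\<integral>\<^sup>+y. g y \<partial>N x) < \<infinity>"
    and "integrable M (\<lambda>x. enn2real (\<integral>\<^sup>+y. g y \<partial>N x))"
    and "(\<integral>x. enn2real (\<integral>\<^sup>+y. g y \<partial>N x) \<partial>M) = enn2real (\<integral>\<^sup>+y. g y \<partial>(M \<bind> N))"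
proof -
  define G where "G x = (\<integral>\<^sup>+y. g y \<partial>N x)" for x
  have G_measurable: "G \<in> borel_measurable M"
    unfolding G_def by (rule measurable_compose[OF N nn_integral_measurable_subprob_algebra[OF g]])
  have bind_eq: "(\<integral>\<^sup>+y. g y \<partial>(M \<bind> N)) = (\<integral>\<^sup>+x. G x \<partial>M)"
    unfolding G_def by (rule nn_integral_bind[OF g N])
  show G_finite: "AE x in M. G x < \<infinity>"
    using nn_integral_PInf_AE[OF G_measurable] finite bind_eq by (simp add: less_top)
  have enn2real_eq: "(\<integral>\<^sup>+x. ennreal (enn2real (G x)) \<partial>M) = (\<integral>\<^sup>+x. G x \<partial>M)"
    by (rule nn_integral_cong_AE) (use G_finite in auto)
  show "integrable M (\<lambda>x. enn2real (G x))"
    by (rule integrableI_nonneg) (use enn2real_eq finite bind_eq G_measurable in auto)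
  show "(\<integral>x. enn2real (G x) \<partial>M) = enn2real (\<integral>\<^sup>+y. g y \<partial>(M \<bind> N))"
    by (subst integral_eq_nn_integral) (use enn2real_eq bind_eq G_measurable in auto)
qed

lemma integral_bind_real:
  fixes f :: "'b \<Rightarrow> real"
  assumes N[measurable]: "N \<in> M \<rightarrow>\<^sub>M subprob_algebra B"
    and f[measurable]: "f \<in> borel_measurable B"
    and integrable: "integrable (M \<bind> N) f"
  shows "(\<integral>y. f y \<partial>(M \<bind> N)) = (\<integral>x. (\<integral>y. f y \<partial>N x) \<partial>M)"
proof -
  define P where "P x = (\<integral>\<^sup>+y. ennreal (f y) \<partial>N x)" for x
  define Q where "Q x = (\<integral>\<^sup>+y. ennreal (- f y) \<partial>N x)" for x
  have norm_finite: "(\<integral>\<^sup>+y. ennreal (norm (f y)) \<partial>(M \<bind> N)) < \<infinity>"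
    using integrable by (simp add: integrable_iff_bounded)
  have finite_pos: "(\<integral>\<^sup>+y. ennreal (f y) \<partial>(M \<bind> N)) < \<infinity>"
    and finite_neg: "(\<integral>\<^sup>+y. ennreal (- f y) \<partial>(M \<bind> N)) < \<infinity>"
    by (rule le_less_trans[OF nn_integral_mono norm_finite]; simp add: ennreal_leI)+
  have "(\<lambda>y. ennreal (f y)) \<in> borel_measurable B" "(\<lambda>y. ennreal (- f y)) \<in> borel_measurable B"
    using f by simp_all
  note pos = nn_integral_bind_finite[OF N this(1) finite_pos, folded P_def]
    and neg = nn_integral_bind_finite[OF N this(2) finite_neg, folded Q_def]
  have [measurable]: "(\<lambda>x. enn2real (P x)) \<in> borel_measurable M" "(\<lambda>x. enn2real (Q x)) \<in> borel_measurable M"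
    by (rule borel_measurable_integrable[OF pos(2)] borel_measurable_integrable[OF neg(2)])+
  have inner: "AE x in M. (\<integral>y. f y \<partial>N x) = enn2real (P x) - enn2real (Q x)"
    using AE_space pos(1) neg(1)
  proof eventually_elim
    case (elim x)
    have "integrable (N x) f"
      unfolding real_integrable_def using f elim sets_kernel[OF N] by (simp add: P_def Q_def less_top cong: measurable_cong_sets)
    then show ?case by (simp add: real_lebesgue_integral_def P_def Q_def)
  qed
  have "(\<integral>x. (\<integral>y. f y \<partial>N x) \<partial>M) = (\<integral>x. enn2real (P x) - enn2real (Q x) \<partial>M)"
    by (rule integral_cong_AE) (use inner in auto)
  also have "\<dots> = enn2real (\<integral>\<^sup>+y. ennreal (f y) \<partial>(M \<bind> N))
                 - enn2real (\<integral>\<^sup>+y. ennreal (- f y) \<partial>(M \<bind> N))"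
    using pos(2,3) neg(2,3) by simp
  also have "\<dots> = (\<integral>y. f y \<partial>(M \<bind> N))"
    using real_lebesgue_integral_def[OF integrable] by simp
  finally show ?thesis by simp
qed

lemma measurable_joint_dist_kernel:
  assumes "K \<in> MX \<rightarrow>\<^sub>M subprob_algebra MY"
  shows "(\<lambda>x. distr (K x) (MY \<Otimes>\<^sub>M MX) (\<lambda>y. (y, x))) \<in> MX \<rightarrow>\<^sub>M subprob_algebra (MY \<Otimes>\<^sub>M MX)"
  by (rule measurable_distr2[OF _ assms]) measurable

lemma sets_joint_dist:
  assumes "space PX \<noteq> {}"
  shows "sets (joint_dist MY MX K PX) = sets (MY \<Otimes>\<^sub>M MX)"
  unfolding joint_dist_def by (rule sets_bind) (use assms in auto)

lemma integral_joint_dist: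
  fixes f :: "'y \<times> 'x \<Rightarrow> real"
  assumes K: "K \<in> MX \<rightarrow>\<^sub>M subprob_algebra MY"
    and PX_sets: "sets PX = sets MX"
    and f: "f \<in> borel_measurable (MY \<Otimes>\<^sub>M MX)"
    and integrable: "integrable (joint_dist MY MX K PX) f"
  shows "(\<integral>z. f z \<partial>joint_dist MY MX K PX) = (\<integral>x. (\<integral>y. f (y, x) \<partial>K x) \<partial>PX)"
proof -
  have "(\<integral>z. f z \<partial>joint_dist MY MX K PX)
      = (\<integral>x. (\<integral>z. f z \<partial>distr (K x) (MY \<Otimes>\<^sub>M MX) (\<lambda>y. (y, x))) \<partial>PX)"
    unfolding joint_dist_def
    using measurable_joint_dist_kernel[OF K] PX_sets f integrable[unfolded joint_dist_def]
    by (intro integral_bind_real) (simp_all cong: measurable_cong_sets)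
  also have "\<dots> = (\<integral>x. (\<integral>y. f (y, x) \<partial>K x) \<partial>PX)"
  proof (rule Bochner_Integration.integral_cong[OF refl])
    fix x assume "x \<in> space PX"
    then have "x \<in> space MX" using sets_eq_imp_space_eq[OF PX_sets] by simp
    then have "(\<lambda>y. (y, x)) \<in> K x \<rightarrow>\<^sub>M MY \<Otimes>\<^sub>M MX"
      using sets_kernel[OF K] by (simp cong: measurable_cong_sets)
    then show "(\<integral>z. f z \<partial>distr (K x) (MY \<Otimes>\<^sub>M MX) (\<lambda>y. (y, x))) = (\<integral>y. f (y, x) \<partial>K x)"
      by (rule integral_distr[OF _ f])
  qed
  finally show ?thesis .
qed

lemma risk_joint_dist_mono:
  fixes L :: "'t \<Rightarrow> 'y \<Rightarrow> 'x \<Rightarrow> real"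
  assumes K: "K \<in> MX \<rightarrow>\<^sub>M subprob_algebra MY"
    and PX_sets: "sets PX = sets MX" and PX_nonempty: "space PX \<noteq> {}"
    and integrable: "\<And>s. s \<in> {t, t'} \<Longrightarrow> integrable (joint_dist MY MX K PX) (\<lambda>z. L s (fst z) (snd z))"
    and cond_integrable: "\<And>s x. s \<in> {t, t'} \<Longrightarrow> x \<in> space MX \<Longrightarrow> integrable (K x) (\<lambda>y. L s y x)"
    and cond_le: "\<And>x. x \<in> space MX \<Longrightarrow> (\<integral>y. L t y x \<partial>K x) \<le> (\<integral>y. L t' y x \<partial>K x)"
  shows "risk L (joint_dist MY MX K PX) t \<le> risk L (joint_dist MY MX K PX) t'"
proof -
  \<comment> \<open>Working with the difference avoids showing that each conditional risk is \<open>PX\<close>-integrable.\<close>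
  define g where "g z = L t' (fst z) (snd z) - L t (fst z) (snd z)" for z
  have "(\<lambda>z. L s (fst z) (snd z)) \<in> borel_measurable (MY \<Otimes>\<^sub>M MX)" if "s \<in> {t, t'}" for s
    using borel_measurable_integrable[OF integrable[OF that]] sets_joint_dist[OF PX_nonempty, of MY MX K]
    by (simp cong: measurable_cong_sets)
  then have g_measurable: "g \<in> borel_measurable (MY \<Otimes>\<^sub>M MX)"
    unfolding g_def by measurable
  have "risk L (joint_dist MY MX K PX) t' - risk L (joint_dist MY MX K PX) t
      = (\<integral>z. g z \<partial>joint_dist MY MX K PX)"
    unfolding risk_def g_def using integrable by simp
  also have "\<dots> = (\<integral>x. (\<integral>y. g (y, x) \<partial>K x) \<partial>PX)"
    using integrable unfolding g_def
    by (intro integral_joint_dist[OF K PX_sets g_measurable[unfolded g_def]]) simp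
  also have "\<dots> \<ge> 0"
  proof (rule integral_nonneg_AE, rule AE_I2)
    fix x assume "x \<in> space PX"
    then have x: "x \<in> space MX" using sets_eq_imp_space_eq[OF PX_sets] by simp
    have "(\<integral>y. g (y, x) \<partial>K x) = (\<integral>y. L t' y x \<partial>K x) - (\<integral>y. L t y x \<partial>K x)"
      unfolding g_def using cond_integrable[OF _ x] by simp
    then show "0 \<le> (\<integral>y. g (y, x) \<partial>K x)" using cond_le[OF x] by simp
  qed
  finally show ?thesis by simp
qed

lemma argmin_functional_eqI:
  assumes unique: "\<exists>!t. t \<in> Theta \<and> (\<forall>t'\<in>Theta. risk L P t \<le> risk L P t')"
    and "t \<in> Theta" and "\<And>t'. t' \<in> Theta \<Longrightarrow> risk L P t \<le> risk L P t'"
  shows "argmin_functional L Theta P = t"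
  unfolding argmin_functional_def by (rule the1_equality[OF unique]) (use assms in blast)

theorem lemma3p3p1:
  fixes MX :: "'x measure" and MY :: "'y measure"
    and Theta :: "'t set" and L :: "'t \<Rightarrow> 'y \<Rightarrow> 'x \<Rightarrow> real"
    and K :: "'x \<Rightarrow> 'y measure" and Acc :: "'x measure set" and \<theta>0 :: 't
  assumes kernel_prob: "\<And>x. x \<in> space MX \<Longrightarrow> prob_space (K x)"
    and kernel_sets: "\<And>x. x \<in> space MX \<Longrightarrow> sets (K x) = sets MY"
    and kernel_meas: "K \<in> MX \<rightarrow>\<^sub>M subprob_algebra MY"
    and acc_prob: "\<And>PX. PX \<in> Acc \<Longrightarrow> prob_space PX"
    and acc_sets: "\<And>PX. PX \<in> Acc \<Longrightarrow> sets PX = sets MX"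
    and acc_mix: "\<And>PX PX' \<alpha>. PX \<in> Acc \<Longrightarrow> prob_space PX' \<Longrightarrow> sets PX' = sets MX
                   \<Longrightarrow> 0 < \<alpha> \<Longrightarrow> \<alpha> \<le> 1 \<Longrightarrow> mix_measure MX \<alpha> PX PX' \<in> Acc"
    and argmin_unique: "\<And>PX. PX \<in> Acc \<Longrightarrow>
          \<exists>!t. t \<in> Theta \<and> (\<forall>t'\<in>Theta. risk L (joint_dist MY MX K PX) t \<le> risk L (joint_dist MY MX K PX) t')"
    and integrable_joint: "\<And>PX t. PX \<in> Acc \<Longrightarrow> t \<in> Theta \<Longrightarrow>
          integrable (joint_dist MY MX K PX) (\<lambda>z. L t (fst z) (snd z))"
    and integrable_cond: "\<And>x t. x \<in> space MX \<Longrightarrow> t \<in> Theta \<Longrightarrow> integrable (K x) (\<lambda>y. L t y x)"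
    and \<theta>0_in: "\<theta>0 \<in> Theta"
    and \<theta>0_min: "\<And>x t. x \<in> space MX \<Longrightarrow> t \<in> Theta \<Longrightarrow>
          (\<integral>y. L \<theta>0 y x \<partial>K x) \<le> (\<integral>y. L t y x \<partial>K x)"
  shows "well_specified (argmin_functional L Theta) MY MX Acc K
         \<and> (\<forall>PX\<in>Acc. argmin_functional L Theta (joint_dist MY MX K PX) = \<theta>0)"
proof -
  have functional_eq: "argmin_functional L Theta (joint_dist MY MX K PX) = \<theta>0" if PX: "PX \<in> Acc" for PX
  proof (rule argmin_functional_eqI[OF argmin_unique[OF PX] \<theta>0_in])
    fix t assume t: "t \<in> Theta"
    have "space PX \<noteq> {}" using prob_space.not_empty[OF acc_prob[OF PX]] .
    then show "risk L (joint_dist MY MX K PX) \<theta>0 \<le> risk L (joint_dist MY MX K PX) t"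
      using acc_sets[OF PX] integrable_joint[OF PX] integrable_cond \<theta>0_min[OF _ t] \<theta>0_in t
      by (intro risk_joint_dist_mono[OF kernel_meas]) auto
  qed
  then show ?thesis unfolding well_specified_def by simp
qed

end
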